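(* Let $p$ be a prime, $l\ge 1$ an integer and $q=p^l$. Let $P(q)$ be the $q\times q$ matrix with entries $\binom{i+j}{i}$, $0\le i,j<q$. Then the reduction of $P(q)$ modulo $p$ has multiplicative order $3$ in $\mathrm{GL}(q,\mathbf{F}_p)$, and its characteristic polynomial $\chi_q(t)=\det(tI(q)-P(q))$ satisfies $$\chi_q(t)\equiv (t^2+t+1)^{\frac{q-\epsilon(q)}{3}}(t-1)^{\frac{q+2\epsilon(q)}{3}}\pmod p,$$ where $\epsilon(q)\in\{-1,0,1\}$ is defined by $\epsilon(q)\equiv q\pmod 3$.
   Context: $I(q)$ denotes the $q\times q$ identity matrix. *)

theory Defs
  imports "Jordan_Normal_Form.Determinant" "Jordan_Normal_Form.Char_Poly"
    "Berlekamp_Zassenhaus.Finite_Field"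
begin

definition pascal_mat :: "nat \<Rightarrow> 'a :: comm_ring_1 mat" where
  "pascal_mat q = mat q q (\<lambda>(i, j). of_nat ((i + j) choose i))"

definition mat_mult_order :: "'a :: comm_ring_1 mat \<Rightarrow> nat" where
  "mat_mult_order A = (LEAST k. 0 < k \<and> A ^\<^sub>m k = 1\<^sub>m (dim_row A))"

definition eps3 :: "nat \<Rightarrow> int" where
  "eps3 q = (if q mod 3 = 0 then 0 else if q mod 3 = 1 then 1 else -1)"

end

(*
  Over a field of characteristic p, with q a power of p, the identity (1 + x)^q = 1 + x^q gives
  binom(i + j, i) = (-1)^j binom(q - 1 - i, j), so P(q) is the transpose of the matrix A of the
  linear map f |-> (1 - x)^(q - 1) f(1 / (1 - x)) on polynomials of degree < q.  The Moebius map
  x |-> 1 / (1 - x) has order 3 and the three factors (1 - x) along an orbit multiply to -1, so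
  A^3 = (-1)^(q - 1) I = I.
  For the characteristic polynomial let a be a root of x^2 - x + 1 in the algebraic closure.
  Conjugating A by the substitution x |-> x - a makes it triangular with diagonal entries
  a^k (1 - a)^(q - 1 - k) = w^(q - 1 + k), where w = a^2 is a primitive cube root of unity;
  grouping these q consecutive powers of w into full periods (x - 1)(x^2 + x + 1) and a remainder
  of q mod 3 factors gives the formula.
  Polynomial identities are verified by evaluation at all but finitely many points of the
  (infinite) algebraic closure and transported back along the embedding of the field.
*)
theory Submission
  imports Defs "HOL-Algebra.Algebraic_Closure_Type"
begin

(* HOL-Algebra, imported for the algebraic closure, would otherwise shadow these names. *)
hide_const (open) up_ring.coeff up_ring.monom module.smult Polynomials.degree Divisibility.prime

lemma infinite_UNIV_alg_closed_field: "infinite (UNIV :: 'a :: alg_closed_field set)"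
proof
  assume fin: "finite (UNIV :: 'a set)"
  define p :: "'a poly" where "p = (\<Prod>a\<in>UNIV. [:-a, 1:]) + 1"
  have "degree (\<Prod>a\<in>UNIV. [:-a, 1:] :: 'a poly) = card (UNIV :: 'a set)"
    by (subst degree_prod_eq_sum_degree) auto
  with fin have "degree p > 0"
    unfolding p_def by (metis add.commute degree_1 degree_add_eq_right finite_UNIV_card_ge_0)
  then obtain x where "poly p x = 0"
    using alg_closed_imp_poly_has_root by blast
  moreover have "poly (\<Prod>a\<in>UNIV. [:-a, 1:]) x = 0"
    by (simp add: poly_prod fin)
  ultimately show False
    by (simp add: p_def)
qed

lemma inj_comm_ring_hom_to_ac: "inj_comm_ring_hom (to_ac :: 'a :: field \<Rightarrow> 'a alg_closure)"
  by unfold_locales (simp_all add: to_ac_eq_0_iff)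

lemma poly_eqI_cofinite:
  fixes p r :: "'a :: idom poly"
  assumes "infinite (UNIV :: 'a set)" "finite S" "\<And>x. x \<notin> S \<Longrightarrow> poly p x = poly r x"
  shows "p = r"
proof (rule ccontr)
  assume "p \<noteq> r"
  then have "finite {x. poly (p - r) x = 0}"
    by (intro poly_roots_finite) simp
  moreover have "UNIV \<subseteq> S \<union> {x. poly (p - r) x = 0}"
    using assms(3) by auto
  ultimately show False
    using assms(1,2) finite_subset by blast
qed

lemma poly_eq_sum_lessThan:
  fixes p :: "'a :: comm_semiring_1 poly"
  assumes "degree p < n"
  shows "poly p x = (\<Sum>i<n. coeff p i * x ^ i)"
proof -
  have "poly p x = (\<Sum>i\<le>degree p. coeff p i * x ^ i)"
    by (simp add: poly_altdef)
  also have "\<dots> = (\<Sum>i<n. coeff p i * x ^ i)"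
    by (rule sum.mono_neutral_left) (use assms in \<open>auto simp: coeff_eq_0\<close>)
  finally show ?thesis .
qed

lemma pcompose_eq_sum_lessThan:
  fixes g r :: "'a :: comm_semiring_1 poly"
  assumes "degree g < n"
  shows "g \<circ>\<^sub>p r = (\<Sum>i<n. smult (coeff g i) (r ^ i))"
proof -
  have "degree (map_poly (\<lambda>c. [:c:]) g) < n"
    using assms degree_map_poly_le le_less_trans by blast
  then show ?thesis
    by (simp add: pcompose_altdef poly_eq_sum_lessThan coeff_map_poly)
qed

definition poly_lin_ext :: "nat \<Rightarrow> (nat \<Rightarrow> 'a :: comm_semiring_1 poly) \<Rightarrow> 'a poly \<Rightarrow> 'a poly" where
  "poly_lin_ext n F g = (\<Sum>i<n. smult (coeff g i) (F i))"

(* The matrix of poly_lin_ext n F in the basis 1, x, ..., x^(n - 1): column k holds the coefficients of F k. *)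
definition coeff_mat :: "nat \<Rightarrow> (nat \<Rightarrow> 'a :: zero poly) \<Rightarrow> 'a mat" where
  "coeff_mat n F = mat n n (\<lambda>(j, k). coeff (F k) j)"

lemma coeff_mat_carrier [simp]: "coeff_mat n F \<in> carrier_mat n n"
  and dim_coeff_mat [simp]: "dim_row (coeff_mat n F) = n" "dim_col (coeff_mat n F) = n"
  by (auto simp: coeff_mat_def)

lemma index_coeff_mat [simp]: "j < n \<Longrightarrow> k < n \<Longrightarrow> coeff_mat n F $$ (j, k) = coeff (F k) j"
  by (simp add: coeff_mat_def)

lemma coeff_mat_cong: "(\<And>k. k < n \<Longrightarrow> F k = G k) \<Longrightarrow> coeff_mat n F = coeff_mat n G"
  by (rule eq_matI) auto

lemma coeff_mat_mult:
  fixes F G :: "nat \<Rightarrow> 'a :: comm_semiring_1 poly"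
  shows "coeff_mat n F * coeff_mat n G = coeff_mat n (\<lambda>k. poly_lin_ext n F (G k))"
proof (rule eq_matI)
  fix j k assume "j < dim_row (coeff_mat n (\<lambda>k. poly_lin_ext n F (G k)))"
    and "k < dim_col (coeff_mat n (\<lambda>k. poly_lin_ext n F (G k)))"
  then have "j < n" "k < n" by simp_all
  then show "(coeff_mat n F * coeff_mat n G) $$ (j, k) = coeff_mat n (\<lambda>k. poly_lin_ext n F (G k)) $$ (j, k)"
    by (simp add: scalar_prod_def poly_lin_ext_def coeff_sum atLeast0LessThan mult.commute)
qed auto

lemma coeff_mat_monom: "coeff_mat n (monom 1) = (1\<^sub>m n :: 'a :: comm_semiring_1 mat)"
  by (rule eq_matI) (auto simp: coeff_monom)

lemma coeff_mat_smult: "coeff_mat n (\<lambda>k. smult c (F k)) = c \<cdot>\<^sub>m coeff_mat n F"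
  by (rule eq_matI) auto

lemma poly_lin_ext_monom: "k < n \<Longrightarrow> poly_lin_ext n F (monom 1 k) = F k"
  by (simp add: poly_lin_ext_def coeff_monom if_distrib[of "\<lambda>c. smult c _"] cong: if_cong)

lemma poly_lin_ext_powers: "degree g < n \<Longrightarrow> poly_lin_ext n (\<lambda>i. r ^ i) g = g \<circ>\<^sub>p r"
  by (simp add: poly_lin_ext_def pcompose_eq_sum_lessThan)

lemma poly_poly_lin_ext: "poly (poly_lin_ext n F g) x = (\<Sum>i<n. coeff g i * poly (F i) x)"
  by (simp add: poly_lin_ext_def poly_sum)

lemma degree_poly_lin_ext_le:
  "(\<And>i. i < n \<Longrightarrow> degree (F i) \<le> d) \<Longrightarrow> degree (poly_lin_ext n F g) \<le> d"
  unfolding poly_lin_ext_def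
  by (intro degree_sum_le) (auto intro: order.trans[OF degree_smult_le])

lemma coeff_mat_shift_mult:
  assumes "\<And>k. k < n \<Longrightarrow> degree (G k) < n"
  shows "coeff_mat n (\<lambda>k. [:c, 1:] ^ k) * coeff_mat n G = coeff_mat n (\<lambda>k. G k \<circ>\<^sub>p [:c, 1:])"
  unfolding coeff_mat_mult by (rule coeff_mat_cong) (simp add: assms poly_lin_ext_powers)

lemma coeff_mat_shift_inverse:
  "coeff_mat n (\<lambda>k. [:c, 1:] ^ k) * coeff_mat n (\<lambda>k. [:-c, 1:] ^ k) = (1\<^sub>m n :: 'a :: comm_ring_1 mat)"
  by (simp add: coeff_mat_shift_mult degree_linear_power pcompose_hom.hom_power pcompose_pCons
      coeff_mat_monom[symmetric] monom_altdef cong: coeff_mat_cong)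

lemma char_poly_coeff_mat_triangular:
  fixes G :: "nat \<Rightarrow> 'a :: comm_ring_1 poly"
  assumes "\<And>j k. j < k \<Longrightarrow> k < n \<Longrightarrow> coeff (G k) j = 0"
  shows "char_poly (coeff_mat n G) = (\<Prod>k<n. [:- coeff (G k) k, 1:])"
proof -
  have "char_poly (coeff_mat n G) = char_poly (transpose_mat (coeff_mat n G))"
    by (simp add: char_poly_transpose_mat[OF coeff_mat_carrier])
  also have "\<dots> = (\<Prod>a \<leftarrow> diag_mat (transpose_mat (coeff_mat n G)). [:- a, 1:])"
    by (rule char_poly_upper_triangular) (auto simp: upper_triangular_def assms)
  also have "\<dots> = (\<Prod>k<n. [:- coeff (G k) k, 1:])"
    by (simp add: diag_mat_def prod.distinct_set_conv_list[symmetric] atLeast0LessThan comp_def)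
  finally show ?thesis .
qed

lemma pow_mat_add:
  assumes "A \<in> carrier_mat n n"
  shows "A ^\<^sub>m (i + j) = A ^\<^sub>m i * A ^\<^sub>m j"
  by (induction j) (use assms in \<open>simp_all add: assoc_mult_mat[of _ n n _ n _ n]\<close>)

lemma pow_mat_mult:
  assumes "A \<in> carrier_mat n n"
  shows "A ^\<^sub>m (i * j) = (A ^\<^sub>m i) ^\<^sub>m j"
proof (induction j)
  case (Suc j)
  have "A ^\<^sub>m (i * Suc j) = A ^\<^sub>m (i * j + i)"
    by (simp add: add.commute)
  then show ?case
    by (simp only: pow_mat_add[OF assms] Suc.IH pow_mat.simps(2))
qed (use assms in simp)

lemma one_pow_mat [simp]: "1\<^sub>m n ^\<^sub>m k = (1\<^sub>m n :: 'a :: semiring_1 mat)"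
  by (induction k) simp_all

lemma transpose_pow_mat:
  fixes A :: "'a :: comm_semiring_1 mat"
  assumes "A \<in> carrier_mat n n"
  shows "transpose_mat (A ^\<^sub>m k) = transpose_mat A ^\<^sub>m k"
proof (induction k)
  case (Suc k)
  have "transpose_mat (A ^\<^sub>m Suc k) = transpose_mat A * transpose_mat A ^\<^sub>m k"
    using transpose_mult[OF pow_carrier_mat[OF assms, of k] assms] by (simp add: Suc.IH)
  also have "\<dots> = transpose_mat A ^\<^sub>m Suc k"
    using pow_mat_add[of "transpose_mat A" n 1 k] assms by simp
  finally show ?case .
qed (use assms in simp)

lemma invertible_mat_if_pow_mat_eq_one:
  assumes A: "A \<in> carrier_mat n n" and "0 < k" and "A ^\<^sub>m k = 1\<^sub>m n"
  shows "invertible_mat A"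
proof -
  obtain j where k: "k = Suc j"
    using \<open>0 < k\<close> by (cases k) auto
  have "A * A ^\<^sub>m j = A ^\<^sub>m k" "A ^\<^sub>m j * A = A ^\<^sub>m k"
    using pow_mat_add[OF A, of 1 j] A by (simp_all add: k)
  with A assms(3) show ?thesis
    unfolding invertible_mat_def inverts_mat_def by (intro conjI exI[of _ "A ^\<^sub>m j"]) auto
qed

lemma mat_mult_order_eq_prime:
  assumes A: "A \<in> carrier_mat n n" and "prime p" and "A ^\<^sub>m p = 1\<^sub>m n" and "A \<noteq> 1\<^sub>m n"
  shows "mat_mult_order A = p"
proof -
  define k where "k = mat_mult_order A"
  have p: "0 < p \<and> A ^\<^sub>m p = 1\<^sub>m (dim_row A)"
    using assms by (simp add: prime_gt_0_nat)
  have minimal: "0 < k \<and> A ^\<^sub>m k = 1\<^sub>m (dim_row A)"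
    "\<And>j. 0 < j \<and> A ^\<^sub>m j = 1\<^sub>m (dim_row A) \<Longrightarrow> k \<le> j"
    unfolding k_def mat_mult_order_def by (rule LeastI[where P = "\<lambda>k. 0 < k \<and> A ^\<^sub>m k = 1\<^sub>m (dim_row A)", OF p]) (rule Least_le)
  have "A ^\<^sub>m p = (A ^\<^sub>m k) ^\<^sub>m (p div k) * A ^\<^sub>m (p mod k)"
    by (metis A div_mult_mod_eq mult.commute pow_mat_add pow_mat_mult)
  then have "A ^\<^sub>m (p mod k) = 1\<^sub>m (dim_row A)"
    using A minimal(1) assms(3) by simp
  then have "p mod k = 0"
    using minimal mod_less_divisor[of k p] by (meson not_le zero_less_iff_neq_zero)
  then have "k = 1 \<or> k = p"
    using \<open>prime p\<close> by (simp add: prime_nat_iff dvd_eq_mod_eq_0)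
  moreover have "k \<noteq> 1"
    using A minimal(1) assms(4) by auto
  ultimately show ?thesis
    by (simp add: k_def)
qed

section \<open>The Moebius operator and its cube\<close>

definition mobius_op :: "nat \<Rightarrow> 'a :: comm_ring_1 poly \<Rightarrow> 'a poly" where
  "mobius_op n = poly_lin_ext n (\<lambda>i. [:1, -1:] ^ (n - 1 - i))"

definition mobius_mat :: "nat \<Rightarrow> 'a :: comm_ring_1 mat" where
  "mobius_mat n = coeff_mat n (\<lambda>i. [:1, -1:] ^ (n - 1 - i))"

lemma mobius_mat_mult: "mobius_mat n * coeff_mat n G = coeff_mat n (\<lambda>k. mobius_op n (G k))"
  by (simp add: mobius_mat_def mobius_op_def coeff_mat_mult)

lemma mobius_mat_carrier [simp]: "mobius_mat n \<in> carrier_mat n n"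
  and dim_mobius_mat [simp]: "dim_row (mobius_mat n) = n" "dim_col (mobius_mat n) = n"
  by (simp_all add: mobius_mat_def)

lemma degree_mobius_op_less: "0 < n \<Longrightarrow> degree (mobius_op n f) < n"
proof -
  assume "0 < n"
  have "degree ([:1, -1:] ^ m :: 'a poly) \<le> m" for m
    by (rule order.trans[OF degree_power_le]) simp
  then have "degree (mobius_op n f) \<le> n - 1"
    unfolding mobius_op_def by (intro degree_poly_lin_ext_le) (meson diff_le_self order.trans)
  with \<open>0 < n\<close> show ?thesis
    by linarith
qed

lemma poly_mobius_op:
  fixes f :: "'a :: field poly"
  assumes "degree f < n" and "x \<noteq> 1"
  shows "poly (mobius_op n f) x = (1 - x) ^ (n - 1) * poly f (1 / (1 - x))"
proof -
  have split: "(1 - x) ^ (n - 1 - i) = (1 - x) ^ (n - 1) * (1 / (1 - x)) ^ i" if "i < n" for i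
  proof -
    have "(1 - x) ^ (n - 1 - i) = (1 - x) ^ (n - 1) / (1 - x) ^ i"
      using that assms(2) by (intro power_diff) auto
    then show ?thesis
      by (simp add: power_one_over)
  qed
  have "poly (mobius_op n f) x = (\<Sum>i<n. coeff f i * (1 - x) ^ (n - 1 - i))"
    by (simp add: mobius_op_def poly_poly_lin_ext poly_power)
  also have "\<dots> = (\<Sum>i<n. (1 - x) ^ (n - 1) * (coeff f i * (1 / (1 - x)) ^ i))"
    by (rule sum.cong[OF refl]) (simp only: lessThan_iff split mult.left_commute)
  also have "\<dots> = (1 - x) ^ (n - 1) * poly f (1 / (1 - x))"
    by (simp add: poly_eq_sum_lessThan[OF assms(1)] sum_distrib_left)
  finally show ?thesis .
qed

lemma mobius_op_cube:
  fixes f :: "'a :: field poly"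
  assumes inf: "infinite (UNIV :: 'a set)" and deg: "degree f < n"
  shows "mobius_op n (mobius_op n (mobius_op n f)) = smult ((-1) ^ (n - 1)) f"
proof (rule poly_eqI_cofinite[OF inf, of "{0, 1}"])
  fix x :: 'a assume "x \<notin> {0, 1}"
  then have "x \<noteq> 0" "x \<noteq> 1" by auto
  have deg_mobius: "degree (mobius_op n g) < n" for g :: "'a poly"
    using deg by (intro degree_mobius_op_less) simp
  define y where "y = 1 / (1 - x)"
  define z where "z = 1 / (1 - y)"
  have "y \<noteq> 1" "z \<noteq> 1" "1 / (1 - z) = x" "(1 - x) * (1 - y) * (1 - z) = -1"
    using \<open>x \<noteq> 0\<close> \<open>x \<noteq> 1\<close> by (simp_all add: y_def z_def field_simps)
  then have "poly (mobius_op n (mobius_op n (mobius_op n f))) x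
      = (1 - x) ^ (n - 1) * ((1 - y) ^ (n - 1) * ((1 - z) ^ (n - 1) * poly f x))"
    using \<open>x \<noteq> 1\<close> by (simp add: poly_mobius_op deg deg_mobius y_def[symmetric] z_def[symmetric])
  also have "\<dots> = ((1 - x) * (1 - y) * (1 - z)) ^ (n - 1) * poly f x"
    by (simp only: power_mult_distrib mult.assoc)
  also have "\<dots> = poly (smult ((-1) ^ (n - 1)) f) x"
    using \<open>(1 - x) * (1 - y) * (1 - z) = -1\<close> by simp
  finally show "poly (mobius_op n (mobius_op n (mobius_op n f))) x = poly (smult ((-1) ^ (n - 1)) f) x" .
qed simp

lemma mobius_mat_cube_infinite:
  assumes "infinite (UNIV :: 'a :: field set)"
  shows "mobius_mat n ^\<^sub>m 3 = (-1) ^ (n - 1) \<cdot>\<^sub>m (1\<^sub>m n :: 'a mat)"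
proof -
  have columns: "mobius_mat n = coeff_mat n (\<lambda>k. mobius_op n (monom (1 :: 'a) k))"
    unfolding mobius_mat_def mobius_op_def by (rule coeff_mat_cong) (simp add: poly_lin_ext_monom)
  have "mobius_mat n ^\<^sub>m 3 = mobius_mat n * (mobius_mat n * (mobius_mat n :: 'a mat))"
    by (simp add: numeral_3_eq_3 assoc_mult_mat[OF mobius_mat_carrier mobius_mat_carrier mobius_mat_carrier])
  also have "\<dots> = coeff_mat n (\<lambda>k. mobius_op n (mobius_op n (mobius_op n (monom (1 :: 'a) k))))"
    by (subst (3) columns) (simp add: mobius_mat_mult)
  also have "\<dots> = coeff_mat n (\<lambda>k. smult ((-1) ^ (n - 1)) (monom 1 k))"
    using assms by (intro coeff_mat_cong mobius_op_cube) (simp_all add: degree_monom_eq)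
  finally show ?thesis
    by (simp add: coeff_mat_smult coeff_mat_monom)
qed

lemma coeff_one_minus_x_power: "coeff ([:1, -1:] ^ m) j = (-1) ^ j * (of_nat (m choose j) :: 'a :: comm_ring_1)"
proof (cases "j \<le> m")
  case True
  then show ?thesis
    by (simp add: coeff_linear_poly_power)
next
  case False
  have "degree ([:1, -1:] ^ m :: 'a poly) \<le> m"
    by (rule order.trans[OF degree_power_le]) simp
  with False show ?thesis
    by (simp add: coeff_eq_0 binomial_eq_0)
qed

lemma index_mobius_mat:
  "j < n \<Longrightarrow> k < n \<Longrightarrow> mobius_mat n $$ (j, k) = (-1) ^ j * of_nat ((n - 1 - k) choose j)"
  by (simp add: mobius_mat_def coeff_one_minus_x_power)

lemma (in comm_ring_hom) mat_hom_mobius_mat: "map_mat hom (mobius_mat n) = mobius_mat n"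
  by (rule eq_matI) (simp_all add: index_mobius_mat hom_distribs)

lemma mobius_mat_cube: "mobius_mat n ^\<^sub>m 3 = (-1) ^ (n - 1) \<cdot>\<^sub>m (1\<^sub>m n :: 'a :: field mat)"
proof -
  interpret inj_comm_ring_hom "to_ac :: 'a \<Rightarrow> 'a alg_closure"
    by (rule inj_comm_ring_hom_to_ac)
  have "map_mat to_ac (mobius_mat n ^\<^sub>m 3 :: 'a mat) = mobius_mat n ^\<^sub>m 3"
    by (simp add: mat_hom_pow[OF mobius_mat_carrier] mat_hom_mobius_mat)
  also have "\<dots> = (-1) ^ (n - 1) \<cdot>\<^sub>m 1\<^sub>m n"
    by (rule mobius_mat_cube_infinite[OF infinite_UNIV_alg_closed_field])
  also have "\<dots> = map_mat to_ac ((-1) ^ (n - 1) \<cdot>\<^sub>m (1\<^sub>m n :: 'a mat))"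
    by (rule eq_matI) (simp_all add: hom_distribs)
  finally show ?thesis
    by (rule mat_hom_inj)
qed

section \<open>Triangularisation of the Moebius operator\<close>

definition mobius_shifted_poly :: "nat \<Rightarrow> 'a :: comm_ring_1 \<Rightarrow> nat \<Rightarrow> 'a poly" where
  "mobius_shifted_poly n a k = smult (a ^ k) (monom 1 k * [:1 - a, -1:] ^ (n - 1 - k))"

lemma degree_mobius_shifted_poly_less: "k < n \<Longrightarrow> degree (mobius_shifted_poly n a k) < n"
proof -
  assume "k < n"
  have "degree (mobius_shifted_poly n a k) \<le> degree (monom (1 :: 'a) k) + degree ([:1 - a, -1:] ^ (n - 1 - k))"
    unfolding mobius_shifted_poly_def by (rule order.trans[OF degree_smult_le degree_mult_le])
  also have "\<dots> \<le> k + (n - 1 - k)"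
    by (intro add_mono degree_monom_le order.trans[OF degree_power_le]) simp
  finally show ?thesis
    using \<open>k < n\<close> by linarith
qed

lemma coeff_mobius_shifted_poly:
  "coeff (mobius_shifted_poly n a k) j = (if j < k then 0 else a ^ k * coeff ([:1 - a, -1:] ^ (n - 1 - k)) (j - k))"
  by (simp add: mobius_shifted_poly_def coeff_monom_mult)

lemma mobius_op_shift:
  fixes a :: "'a :: field"
  assumes inf: "infinite (UNIV :: 'a set)" and a: "a * a - a + 1 = 0" and "k < n"
  shows "mobius_op n ([:-a, 1:] ^ k) = mobius_shifted_poly n a k \<circ>\<^sub>p [:-a, 1:]"
proof (rule poly_eqI_cofinite[OF inf, of "{1}"])
  fix x :: 'a assume "x \<notin> {1}"
  then have "x \<noteq> 1" by simp
  have "(1 - x) * (1 / (1 - x) - a) = 1 - a + a * x"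
    using \<open>x \<noteq> 1\<close> by (simp add: field_simps)
  also have "\<dots> = a * (x - a)"
    using a by (simp add: algebra_simps eq_neg_iff_add_eq_0)
  finally have key: "(1 - x) * (1 / (1 - x) - a) = a * (x - a)" .
  have shifted: "poly [:1 - a, -1:] (poly [:-a, 1:] x) = 1 - x"
    by simp
  have "poly (mobius_op n ([:-a, 1:] ^ k)) x = (1 - x) ^ (n - 1) * (1 / (1 - x) - a) ^ k"
    using \<open>k < n\<close> \<open>x \<noteq> 1\<close> by (simp add: poly_mobius_op degree_linear_power poly_power)
  also have "\<dots> = (1 - x) ^ (n - 1 - k) * ((1 - x) * (1 / (1 - x) - a)) ^ k"
    using \<open>k < n\<close> by (simp add: power_mult_distrib power_add[symmetric])
  also have "\<dots> = poly (mobius_shifted_poly n a k \<circ>\<^sub>p [:-a, 1:]) x"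
    unfolding key mobius_shifted_poly_def poly_pcompose poly_smult poly_mult poly_monom poly_power shifted
    by (simp add: power_mult_distrib mult_ac)
  finally show "poly (mobius_op n ([:-a, 1:] ^ k)) x = poly (mobius_shifted_poly n a k \<circ>\<^sub>p [:-a, 1:]) x" .
qed simp

lemma mobius_mat_similar_shifted:
  fixes a :: "'a :: field"
  assumes "infinite (UNIV :: 'a set)" and "a * a - a + 1 = 0"
  shows "similar_mat (mobius_mat n) (coeff_mat n (mobius_shifted_poly n a))"
proof -
  define T :: "'a mat" where "T = coeff_mat n (\<lambda>k. [:-a, 1:] ^ k)"
  define T' :: "'a mat" where "T' = coeff_mat n (\<lambda>k. [:a, 1:] ^ k)"
  define U where "U = coeff_mat n (mobius_shifted_poly n a)"
  have carrier: "T \<in> carrier_mat n n" "T' \<in> carrier_mat n n" "U \<in> carrier_mat n n"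
    by (simp_all add: T_def T'_def U_def)
  have inverse: "T * T' = 1\<^sub>m n" "T' * T = 1\<^sub>m n"
    using coeff_mat_shift_inverse[of n "-a"] coeff_mat_shift_inverse[of n a]
    by (simp_all add: T_def T'_def)
  have "mobius_mat n * T = coeff_mat n (\<lambda>k. mobius_shifted_poly n a k \<circ>\<^sub>p [:-a, 1:])"
    unfolding T_def mobius_mat_mult using assms by (intro coeff_mat_cong mobius_op_shift)
  also have "\<dots> = T * U"
    unfolding T_def U_def by (rule coeff_mat_shift_mult[symmetric]) (rule degree_mobius_shifted_poly_less)
  finally have conj: "mobius_mat n * T = T * U" .
  have "mobius_mat n = mobius_mat n * (T * T')"
    using inverse by simp
  also have "\<dots> = T * U * T'"
    by (simp add: assoc_mult_mat[OF mobius_mat_carrier carrier(1,2), symmetric] conj)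
  finally have "mobius_mat n = T * U * T'" .
  with carrier inverse show ?thesis
    unfolding U_def by (intro similar_matI) auto
qed

lemma char_poly_mobius_mat_infinite:
  fixes a :: "'a :: field"
  assumes "infinite (UNIV :: 'a set)" and "a * a - a + 1 = 0"
  shows "char_poly (mobius_mat n :: 'a mat) = (\<Prod>k<n. [:- (a ^ k * (1 - a) ^ (n - 1 - k)), 1:])"
proof -
  have "char_poly (mobius_mat n :: 'a mat) = char_poly (coeff_mat n (mobius_shifted_poly n a))"
    using assms by (intro char_poly_similar mobius_mat_similar_shifted)
  also have "\<dots> = (\<Prod>k<n. [:- (a ^ k * (1 - a) ^ (n - 1 - k)), 1:])"
    by (subst char_poly_coeff_mat_triangular) (simp_all add: coeff_mobius_shifted_poly coeff_0_power)
  finally show ?thesis .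
qed

section \<open>Counting the eigenvalues\<close>

lemma cube_root_of_unity_cube:
  fixes w :: "'a :: comm_ring_1"
  assumes "w * w + w + 1 = 0"
  shows "w ^ 3 = 1"
proof -
  have "w ^ 3 - 1 = (w - 1) * (w * w + w + 1)"
    by (simp add: algebra_simps power3_eq_cube)
  with assms show ?thesis
    by simp
qed

lemma linear_factors_cube_roots_of_unity:
  fixes w b :: "'a :: comm_ring_1"
  assumes "w * w + w + 1 = 0" and "b ^ 3 = 1"
  shows "[:-b, 1:] * [:-(b * w), 1:] * [:-(b * w * w), 1:] = [:-1, 1:] * [:1, 1, 1:]"
proof -
  have "[:-b, 1:] * [:-(b * w), 1:] * [:-(b * w * w), 1:]
      = [:- (b ^ 3 * w ^ 3), b * b * w * (w * w + w + 1), - (b * (w * w + w + 1)), 1:]"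
    by (simp add: algebra_simps power3_eq_cube)
  also have "\<dots> = [:-1, 0, 0, 1:]"
  proof -
    have "b ^ 3 * w ^ 3 = 1"
      using assms by (simp add: cube_root_of_unity_cube)
    then show ?thesis
      by (simp only: assms(1)) simp
  qed
  also have "\<dots> = [:-1, 1:] * [:1, 1, 1:]"
    by simp
  finally show ?thesis .
qed

lemma linear_factors_primitive_cube_roots:
  fixes w :: "'a :: comm_ring_1"
  assumes "w * w + w + 1 = 0"
  shows "[:-w, 1:] * [:-(w * w), 1:] = [:1, 1, 1:]"
proof -
  have "[:-w, 1:] * [:-(w * w), 1:] = [:w ^ 3, - (w * w + w), 1:]"
    by (simp add: algebra_simps power3_eq_cube)
  moreover have "- (w * w + w) = 1"
    using assms by (metis add_eq_0_iff)
  ultimately show ?thesis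
    using assms by (simp add: cube_root_of_unity_cube)
qed

lemma prod_consecutive_cube_root_powers:
  fixes w :: "'a :: comm_ring_1"
  assumes w: "w * w + w + 1 = 0"
  shows "(\<Prod>i<3 * m. [:- (w ^ (s + i)), 1:]) = [:1, 1, 1:] ^ m * [:-1, 1:] ^ m"
proof (induction m)
  case (Suc m)
  define b where "b = w ^ (s + 3 * m)"
  have "b ^ 3 = (w ^ 3) ^ (s + 3 * m)"
    unfolding b_def by (simp only: power_mult[symmetric] mult.commute)
  then have "b ^ 3 = 1"
    by (simp add: cube_root_of_unity_cube[OF w])
  have "(\<Prod>i<3 * Suc m. [:- (w ^ (s + i)), 1:])
      = (\<Prod>i<3 * m. [:- (w ^ (s + i)), 1:]) * ([:-b, 1:] * [:-(b * w), 1:] * [:-(b * w * w), 1:])"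
  proof -
    have "w ^ (s + 3 * m) = b" "w ^ (s + Suc (3 * m)) = b * w" "w ^ (s + Suc (Suc (3 * m))) = b * w * w"
      by (simp_all add: b_def)
    moreover have "3 * Suc m = Suc (Suc (Suc (3 * m)))"
      by simp
    ultimately show ?thesis
      by (simp only: prod.lessThan_Suc mult.assoc)
  qed
  also have "\<dots> = [:1, 1, 1:] ^ Suc m * [:-1, 1:] ^ Suc m"
    unfolding Suc.IH linear_factors_cube_roots_of_unity[OF w \<open>b ^ 3 = 1\<close>] by (simp only: power_Suc mult_ac)
  finally show ?case .
qed simp

lemma prod_cube_root_powers_eps3:
  fixes w :: "'a :: comm_ring_1"
  assumes w: "w * w + w + 1 = 0"
  shows "(\<Prod>i<n. [:- (w ^ (n - 1 + i)), 1:])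
    = [:1, 1, 1:] ^ nat ((int n - eps3 n) div 3) * [:-1, 1:] ^ nat ((int n + 2 * eps3 n) div 3)"
proof -
  define m where "m = n div 3"
  have w_power: "w ^ (3 * k + j) = w ^ j" for k j
    by (simp add: power_add power_mult cube_root_of_unity_cube[OF w])
  have "n mod 3 = 0 \<or> n mod 3 = 1 \<or> n mod 3 = 2"
    by presburger
  then show ?thesis
  proof (elim disjE)
    assume r: "n mod 3 = 0"
    then have "n = 3 * m"
      unfolding m_def by presburger
    moreover have "eps3 n = 0"
      using r by (simp add: eps3_def)
    ultimately show ?thesis
      using prod_consecutive_cube_root_powers[OF w, where m = m and s = "n - 1"] by simp
  next
    assume r: "n mod 3 = 1"
    then have n: "n = Suc (3 * m)"
      unfolding m_def by presburger
    have "eps3 n = 1"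
      using r by (simp add: eps3_def)
    then have exponents: "nat ((int n - eps3 n) div 3) = m" "nat ((int n + 2 * eps3 n) div 3) = Suc m"
      using n by simp_all
    have "w ^ (3 * m + 3 * m) = 1"
      using w_power[of "2 * m" 0] by (simp add: mult_2_right)
    then have "(\<Prod>i<n. [:- (w ^ (n - 1 + i)), 1:])
        = (\<Prod>i<3 * m. [:- (w ^ (3 * m + i)), 1:]) * [:-1, 1:]"
      unfolding n by (simp only: diff_Suc_1 prod.lessThan_Suc)
    also have "\<dots> = [:1, 1, 1:] ^ m * [:-1, 1:] ^ m * [:-1, 1:]"
      by (simp only: prod_consecutive_cube_root_powers[OF w])
    finally show ?thesis
      unfolding exponents by (simp only: power_Suc2 mult.assoc)
  next
    assume r: "n mod 3 = 2"
    then have n: "n = Suc (Suc (3 * m))"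
      unfolding m_def by presburger
    have "eps3 n = -1"
      using r by (simp add: eps3_def)
    then have exponents: "nat ((int n - eps3 n) div 3) = Suc m" "nat ((int n + 2 * eps3 n) div 3) = m"
      using n by simp_all
    have "w ^ (Suc (3 * m) + 3 * m) = w" "w ^ (Suc (3 * m) + Suc (3 * m)) = w * w"
      using w_power[of "2 * m" 1] w_power[of "2 * m" 2] by (simp_all add: power2_eq_square)
    then have "(\<Prod>i<n. [:- (w ^ (n - 1 + i)), 1:])
        = (\<Prod>i<3 * m. [:- (w ^ (Suc (3 * m) + i)), 1:]) * ([:-w, 1:] * [:-(w * w), 1:])"
      unfolding n by (simp only: diff_Suc_1 prod.lessThan_Suc mult.assoc)
    also have "\<dots> = [:1, 1, 1:] ^ m * [:-1, 1:] ^ m * [:1, 1, 1:]"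
      by (simp only: prod_consecutive_cube_root_powers[OF w] linear_factors_primitive_cube_roots[OF w])
    finally show ?thesis
      unfolding exponents by (simp only: power_Suc2 mult_ac)
  qed
qed

lemma mobius_eigenvalue_eq_power:
  fixes a :: "'a :: comm_ring_1"
  assumes a: "a * a - a + 1 = 0" and sign: "(-1 :: 'a) ^ (n - 1) = 1" and "k < n"
  shows "a ^ k * (1 - a) ^ (n - 1 - k) = (a * a) ^ (n - 1 + k)"
proof -
  have aa: "a * a = a - 1"
    using a by (simp add: algebra_simps eq_diff_eq)
  have "a * (1 - a) = 1"
    using aa by (simp add: algebra_simps)
  then have "a ^ k * (1 - a) ^ (n - 1 - k) = a ^ k * (1 - a) ^ (n - 1 - k) * (a * (1 - a)) ^ k"
    by simp
  also have "\<dots> = (a * a) ^ k * ((1 - a) ^ (n - 1 - k) * (1 - a) ^ k)"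
    by (simp add: power_mult_distrib mult_ac)
  also have "(1 - a) ^ (n - 1 - k) * (1 - a) ^ k = (1 - a) ^ (n - 1)"
    using \<open>k < n\<close> by (simp flip: power_add)
  also have "(1 - a) ^ (n - 1) = (-1) ^ (n - 1) * (a * a) ^ (n - 1)"
    by (simp only: aa power_mult_distrib[symmetric]) simp
  also have "(a * a) ^ k * ((-1) ^ (n - 1) * (a * a) ^ (n - 1)) = (a * a) ^ (n - 1 + k)"
    unfolding sign by (simp add: power_add mult.commute)
  finally show ?thesis .
qed

lemma char_poly_mobius_mat:
  assumes sign: "(-1 :: 'a :: field) ^ (n - 1) = 1"
  shows "char_poly (mobius_mat n :: 'a mat)
    = [:1, 1, 1:] ^ nat ((int n - eps3 n) div 3) * [:-1, 1:] ^ nat ((int n + 2 * eps3 n) div 3)"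
proof -
  interpret inj_comm_ring_hom "to_ac :: 'a \<Rightarrow> 'a alg_closure"
    by (rule inj_comm_ring_hom_to_ac)
  interpret poly_hom: map_poly_inj_comm_ring_hom "to_ac :: 'a \<Rightarrow> 'a alg_closure" ..
  obtain a :: "'a alg_closure" where "poly [:1, -1, 1:] a = 0"
    using alg_closed_imp_poly_has_root[of "[:1, -1, 1:]"] by auto
  then have a: "a * a - a + 1 = 0"
    by (simp add: algebra_simps)
  have "(a * a) * (a * a) + a * a + 1 = (a * a + a + 1) * (a * a - a + 1)"
    by (simp add: algebra_simps)
  with a have w: "(a * a) * (a * a) + a * a + 1 = 0"
    by simp
  have sign': "(-1 :: 'a alg_closure) ^ (n - 1) = 1"
    using arg_cong[OF sign, of to_ac] by (simp add: hom_distribs)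
  have "map_poly to_ac (char_poly (mobius_mat n :: 'a mat)) = char_poly (mobius_mat n :: 'a alg_closure mat)"
    by (simp add: char_poly_hom[OF mobius_mat_carrier, symmetric] mat_hom_mobius_mat)
  also have "\<dots> = (\<Prod>k<n. [:- (a ^ k * (1 - a) ^ (n - 1 - k)), 1:])"
    by (rule char_poly_mobius_mat_infinite[OF infinite_UNIV_alg_closed_field a])
  also have "\<dots> = (\<Prod>k<n. [:- ((a * a) ^ (n - 1 + k)), 1:])"
    by (rule prod.cong[OF refl]) (simp only: lessThan_iff mobius_eigenvalue_eq_power[OF a sign'])
  also have "\<dots> = [:1, 1, 1:] ^ nat ((int n - eps3 n) div 3) * [:-1, 1:] ^ nat ((int n + 2 * eps3 n) div 3)"
    by (rule prod_cube_root_powers_eps3[OF w])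
  also have "\<dots> = map_poly to_ac
      ([:1, 1, 1:] ^ nat ((int n - eps3 n) div 3) * [:-1, 1:] ^ nat ((int n + 2 * eps3 n) div 3))"
  proof -
    have "map_poly to_ac [:1, 1, 1 :: 'a:] = [:1, 1, 1:]" "map_poly to_ac [:-1, 1 :: 'a:] = [:-1, 1:]"
      by (simp_all add: map_poly_pCons)
    then show ?thesis
      by (simp only: poly_hom.hom_mult poly_hom.hom_power)
  qed
  finally show ?thesis
    by (rule poly_hom.injectivity)
qed

section \<open>Binomial coefficients in prime power characteristic\<close>

lemma of_nat_choose_char_power_eq_0:
  assumes "prime CHAR('a :: comm_ring_1)" and "q = CHAR('a) ^ l" and "0 < j" "j < q"
  shows "of_nat (q choose j) = (0 :: 'a)"
proof -
  have "([:1, 1:] :: 'a poly) ^ q = ([:0, 1:] + 1) ^ q"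
    by (simp add: one_pCons)
  also have "\<dots> = [:0, 1:] ^ q + 1"
    using assms(1,2) by (subst freshmans_dream') simp_all
  finally have "coeff ([:1, 1:] ^ q) j = coeff ([:0, 1:] ^ q + 1 :: 'a poly) j"
    by simp
  with assms(3,4) show ?thesis
    by (simp add: coeff_linear_poly_power power_0_left)
qed

lemma of_nat_choose_pred_char_power:
  assumes "prime CHAR('a :: comm_ring_1)" and "q = CHAR('a) ^ l" and "j < q"
  shows "of_nat ((q - 1) choose j) = ((-1) ^ j :: 'a)"
  using \<open>j < q\<close>
proof (induction j)
  case (Suc j)
  have "q = Suc (q - 1)"
    using Suc.prems by simp
  then have "of_nat (q choose Suc j) = (of_nat ((q - 1) choose j) + of_nat ((q - 1) choose Suc j) :: 'a)"
    by (metis binomial_Suc_Suc of_nat_add)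
  moreover have "of_nat (q choose Suc j) = (0 :: 'a)"
    using assms(1,2) Suc.prems by (intro of_nat_choose_char_power_eq_0) simp_all
  ultimately show ?case
    using Suc by (simp add: eq_neg_iff_add_eq_0 add.commute)
qed simp

lemma of_nat_choose_add_char_power:
  assumes "prime CHAR('a :: comm_ring_1)" and "q = CHAR('a) ^ l" and "i < q" "j < q"
  shows "(of_nat ((i + j) choose i) :: 'a) = (-1) ^ j * of_nat ((q - 1 - i) choose j)"
  using assms(3,4)
proof (induction i arbitrary: j)
  case 0
  then show ?case
    using of_nat_choose_pred_char_power[OF assms(1,2) \<open>j < q\<close>] by (simp flip: power_add mult_2)
next
  case (Suc i)
  note outer_IH = Suc.IH
  show ?case
    using \<open>j < q\<close>
  proof (induction j)
    case (Suc j)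
    define M where "M = q - 1 - Suc i"
    have M: "q - 1 - i = Suc M"
      using \<open>Suc i < q\<close> by (simp add: M_def)
    have "(of_nat ((Suc i + Suc j) choose Suc i) :: 'a)
        = of_nat ((i + Suc j) choose i) + of_nat ((Suc i + j) choose Suc i)"
      by simp
    also have "of_nat ((i + Suc j) choose i) = ((-1) ^ Suc j * of_nat (Suc M choose Suc j) :: 'a)"
      using outer_IH[OF Suc_lessD[OF \<open>Suc i < q\<close>] \<open>Suc j < q\<close>] unfolding M .
    also have "of_nat ((Suc i + j) choose Suc i) = ((-1) ^ j * of_nat (M choose j) :: 'a)"
      using Suc.IH[OF Suc_lessD[OF \<open>Suc j < q\<close>]] unfolding M_def .
    finally show ?case
      unfolding M_def[symmetric] by (simp add: algebra_simps)
  qed simp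
qed

lemma minus_one_power_pred_char_power:
  assumes "prime CHAR('a :: comm_ring_1)" and "q = CHAR('a) ^ l"
  shows "(-1 :: 'a) ^ (q - 1) = 1"
proof (cases "CHAR('a) = 2")
  case True
  then have "(2 :: 'a) = 0"
    using of_nat_CHAR[where 'a = 'a] by simp
  then have "(-1 :: 'a) = 1"
    by (simp add: eq_neg_iff_add_eq_0)
  then show ?thesis
    by (simp only: power_one)
next
  case False
  with assms(1) have "odd CHAR('a)"
    by (intro prime_odd_nat) (simp_all add: order_le_neq_trans[OF prime_ge_2_nat])
  with assms(2) show ?thesis
    by simp
qed

lemma pascal_mat_carrier [simp]: "pascal_mat q \<in> carrier_mat q q"
  by (simp add: pascal_mat_def)

lemma pascal_mat_eq_transpose_mobius_mat:
  assumes "prime CHAR('a :: comm_ring_1)" and "q = CHAR('a) ^ l"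
  shows "pascal_mat q = transpose_mat (mobius_mat q :: 'a mat)"
  by (rule eq_matI)
    (simp_all add: pascal_mat_def index_mobius_mat of_nat_choose_add_char_power[OF assms])

lemma pascal_mat_neq_one:
  assumes "2 \<le> q"
  shows "pascal_mat q \<noteq> (1\<^sub>m q :: 'a :: comm_ring_1 mat)"
proof
  assume "pascal_mat q = (1\<^sub>m q :: 'a mat)"
  then have "pascal_mat q $$ (0, 1) = (0 :: 'a)"
    using assms by simp
  with assms show False
    by (simp add: pascal_mat_def)
qed

lemma pascal_mat_cube:
  assumes "prime CHAR('a :: field)" and "q = CHAR('a) ^ l"
  shows "pascal_mat q ^\<^sub>m 3 = (1\<^sub>m q :: 'a mat)"
proof -
  have "pascal_mat q ^\<^sub>m 3 = transpose_mat (mobius_mat q ^\<^sub>m 3 :: 'a mat)"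
    by (simp add: pascal_mat_eq_transpose_mobius_mat[OF assms] transpose_pow_mat[OF mobius_mat_carrier])
  also have "\<dots> = transpose_mat ((-1) ^ (q - 1) \<cdot>\<^sub>m 1\<^sub>m q)"
    by (simp only: mobius_mat_cube)
  also have "\<dots> = 1\<^sub>m q"
    unfolding minus_one_power_pred_char_power[OF assms] by (rule eq_matI) auto
  finally show ?thesis .
qed

lemma char_poly_pascal_mat:
  assumes "prime CHAR('a :: field)" and "q = CHAR('a) ^ l"
  shows "char_poly (pascal_mat q :: 'a mat)
    = [:1, 1, 1:] ^ nat ((int q - eps3 q) div 3) * [:-1, 1:] ^ nat ((int q + 2 * eps3 q) div 3)"
  using char_poly_mobius_mat[OF minus_one_power_pred_char_power[OF assms]]
  by (simp add: pascal_mat_eq_transpose_mobius_mat[OF assms] char_poly_transpose_mat[OF mobius_mat_carrier])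

theorem proposition1p2:
  fixes l q :: nat
  assumes "l \<ge> 1"
    and "q = CARD('p :: prime_card) ^ l"
  shows "invertible_mat (pascal_mat q :: 'p mod_ring mat)
    \<and> mat_mult_order (pascal_mat q :: 'p mod_ring mat) = 3
    \<and> char_poly (pascal_mat q :: 'p mod_ring mat)
        = [:1, 1, 1:] ^ nat ((int q - eps3 q) div 3)
          * [:-1, 1:] ^ nat ((int q + 2 * eps3 q) div 3)"
proof -
  have char: "prime CHAR('p mod_ring)" and q: "q = CHAR('p mod_ring) ^ l"
    using prime_card[where 'a = 'p] assms(2) by simp_all
  have "CARD('p) \<le> q"
    using assms by (simp add: self_le_power)
  then have "2 \<le> q"
    using prime_ge_2_nat[OF prime_card[where 'a = 'p]] by linarith
  have cube: "pascal_mat q ^\<^sub>m 3 = (1\<^sub>m q :: 'p mod_ring mat)"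
    by (rule pascal_mat_cube[OF char q])
  show ?thesis
    using invertible_mat_if_pow_mat_eq_one[OF pascal_mat_carrier _ cube]
      mat_mult_order_eq_prime[OF pascal_mat_carrier _ cube pascal_mat_neq_one[OF \<open>2 \<le> q\<close>]]
      char_poly_pascal_mat[OF char q]
    by simp
qed

end
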